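(* Let $V$ be a finite set, $\lambda\in\mathbb{C}$, and $A\subseteq V$ with $|A|\ge2$. Then $\big(f_A^{(\lambda)}\big)^2=0$.
   Context: For each $i\in V$ let $\psi_i,\bar\psi_i$ be anticommuting generators of a Grassmann algebra over $\mathbb{C}$. For $A\subseteq V$, $\tau_A=\prod_{i\in A}\bar\psi_i\psi_i$ ($\tau_\emptyset=1$), and $f_A^{(\lambda)}=\lambda(1-|A|)\tau_A+\sum_{i\in A}\tau_{A\setminus\{i\}}-\sum_{i,j\in A,\ i\neq j}\bar\psi_i\psi_j\,\tau_{A\setminus\{i,j\}}$. *)

theory Defs
  imports Complex_Main "HOL-Library.Product_Lexorder"
begin

text \<open>Grassmann algebra over the complex numbers with a linearly ordered set of
generators of type 'g. An element is represented by its coefficient function on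
monomials: a monomial is a finite set of generators, written as the product of
its generators in increasing order. (Infinite sets carry coefficient 0 for all
elements built below.)\<close>

type_synonym 'g grass = "'g set \<Rightarrow> complex"

definition gsign :: "'g::linorder set \<Rightarrow> 'g set \<Rightarrow> complex" where
  "gsign S T = (-1) ^ card {(s, t). s \<in> S \<and> t \<in> T \<and> t < s}"

definition g_zero :: "'g grass" where "g_zero = (\<lambda>U. 0)"
definition g_one :: "'g grass" where "g_one = (\<lambda>U. if U = {} then 1 else 0)"
definition g_gen :: "'g \<Rightarrow> 'g grass" where "g_gen g = (\<lambda>U. if U = {g} then 1 else 0)"
definition g_add :: "'g grass \<Rightarrow> 'g grass \<Rightarrow> 'g grass" where
  "g_add x y = (\<lambda>U. x U + y U)"
definition g_diff :: "'g grass \<Rightarrow> 'g grass \<Rightarrow> 'g grass" where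
  "g_diff x y = (\<lambda>U. x U - y U)"
definition g_smul :: "complex \<Rightarrow> 'g grass \<Rightarrow> 'g grass" where
  "g_smul c x = (\<lambda>U. c * x U)"
definition g_sum :: "('i \<Rightarrow> 'g grass) \<Rightarrow> 'i set \<Rightarrow> 'g grass" where
  "g_sum f I = (\<lambda>U. \<Sum>i\<in>I. f i U)"

text \<open>Product: the coefficient of monomial U is the sum over splittings U = S \<union> (U - S)
with the sign of the shuffle bringing S followed by U - S into increasing order.\<close>
definition g_mul :: "'g::linorder grass \<Rightarrow> 'g grass \<Rightarrow> 'g grass" where
  "g_mul x y = (\<lambda>U. \<Sum>S\<in>Pow U. gsign S (U - S) * x S * y (U - S))"

definition psi :: "'a::linorder \<Rightarrow> ('a \<times> bool) grass" where
  "psi i = g_gen (i, False)"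
definition psibar :: "'a::linorder \<Rightarrow> ('a \<times> bool) grass" where
  "psibar i = g_gen (i, True)"

definition tau :: "'a::linorder set \<Rightarrow> ('a \<times> bool) grass" where
  "tau A = foldr (\<lambda>i acc. g_mul (g_mul (psibar i) (psi i)) acc) (sorted_list_of_set A) g_one"

definition fA :: "complex \<Rightarrow> 'a::linorder set \<Rightarrow> ('a \<times> bool) grass" where
  "fA lam A = g_diff
     (g_add (g_smul (lam * (1 - of_nat (card A))) (tau A))
            (g_sum (\<lambda>i. tau (A - {i})) A))
     (g_sum (\<lambda>(i, j). g_mul (g_mul (psibar i) (psi j)) (tau (A - {i, j})))
            {(i, j). i \<in> A \<and> j \<in> A \<and> i \<noteq> j})"

end

theory Submission
  imports Defs
begin

text \<open>Every term of \<open>f\<^sub>A\<close> has degree at least \<open>2|A| - 2\<close> in the \<open>2|A|\<close> generators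
  \<open>\<psi>\<^sub>i, psibar\<^sub>i\<close> (\<open>i \<in> A\<close>), so \<open>(f\<^sub>A)\<^sup>2\<close> has degree at least \<open>4|A| - 4\<close>, which exceeds \<open>2|A|\<close>
  once \<open>|A| \<ge> 3\<close>; hence the square vanishes. For \<open>A = {a, b}\<close> only the degree-2 part
  \<open>\<tau>\<^sub>a + \<tau>\<^sub>b - psibar\<^sub>a \<psi>\<^sub>b - psibar\<^sub>b \<psi>\<^sub>a\<close> contributes; its square is
  \<open>2\<tau>\<^sub>a \<tau>\<^sub>b + 2 psibar\<^sub>a \<psi>\<^sub>b psibar\<^sub>b \<psi>\<^sub>a\<close>, and \<open>psibar\<^sub>a \<psi>\<^sub>b psibar\<^sub>b \<psi>\<^sub>a = -\<tau>\<^sub>a \<tau>\<^sub>b\<close>.\<close>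

definition supp_deg_ge :: "'g set \<Rightarrow> nat \<Rightarrow> 'g grass \<Rightarrow> bool" where
  "supp_deg_ge W d x \<longleftrightarrow> (\<forall>U. x U \<noteq> 0 \<longrightarrow> U \<subseteq> W \<and> finite U \<and> d \<le> card U)"

lemma supp_deg_ge_mono:
  "supp_deg_ge W d x \<Longrightarrow> W \<subseteq> W' \<Longrightarrow> d' \<le> d \<Longrightarrow> supp_deg_ge W' d' x"
  unfolding supp_deg_ge_def by fastforce

lemma supp_deg_ge_add:
  "supp_deg_ge W d x \<Longrightarrow> supp_deg_ge W d y \<Longrightarrow> supp_deg_ge W d (g_add x y)"
  unfolding supp_deg_ge_def g_add_def by (metis add.right_neutral add_0)

lemma supp_deg_ge_diff:
  "supp_deg_ge W d x \<Longrightarrow> supp_deg_ge W d y \<Longrightarrow> supp_deg_ge W d (g_diff x y)"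
  unfolding supp_deg_ge_def g_diff_def by (metis diff_zero diff_self)

lemma supp_deg_ge_smul: "supp_deg_ge W d x \<Longrightarrow> supp_deg_ge W d (g_smul c x)"
  unfolding supp_deg_ge_def g_smul_def by fastforce

lemma supp_deg_ge_sum:
  "(\<And>k. k \<in> I \<Longrightarrow> supp_deg_ge W d (f k)) \<Longrightarrow> supp_deg_ge W d (g_sum f I)"
  unfolding supp_deg_ge_def g_sum_def by (metis (mono_tags, lifting) sum.neutral)

lemma supp_deg_ge_gen: "g \<in> W \<Longrightarrow> supp_deg_ge W 1 (g_gen g)"
  unfolding supp_deg_ge_def g_gen_def by auto

lemma supp_deg_ge_one: "supp_deg_ge W 0 g_one"
  unfolding supp_deg_ge_def g_one_def by auto

lemma supp_deg_ge_mul: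
  fixes x y :: "'g::linorder grass"
  assumes x: "supp_deg_ge W p x" and y: "supp_deg_ge W q y"
  shows "supp_deg_ge W (p + q) (g_mul x y)"
  unfolding supp_deg_ge_def
proof (intro allI impI)
  fix U assume "g_mul x y U \<noteq> 0"
  then obtain S where "S \<subseteq> U" "gsign S (U - S) * x S * y (U - S) \<noteq> 0"
    unfolding g_mul_def by (auto elim: sum.not_neutral_contains_not_neutral)
  then have "x S \<noteq> 0" "y (U - S) \<noteq> 0" by auto
  with x y have S: "S \<subseteq> W" "finite S" "p \<le> card S"
    and US: "U - S \<subseteq> W" "finite (U - S)" "q \<le> card (U - S)"
    unfolding supp_deg_ge_def by auto
  have U: "U = S \<union> (U - S)" using \<open>S \<subseteq> U\<close> by auto
  then have "card U = card S + card (U - S)"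
    using S(2) US(2) by (metis Diff_disjoint card_Un_disjoint)
  with S US U show "U \<subseteq> W \<and> finite U \<and> p + q \<le> card U"
    by (metis add_mono finite_UnI le_sup_iff)
qed

lemma supp_deg_ge_eq_zero:
  assumes supp: "supp_deg_ge W d x" and "finite W" "card W < d"
  shows "x = g_zero"
proof
  fix U
  show "x U = g_zero U"
  proof (rule ccontr)
    assume "x U \<noteq> g_zero U"
    then have "U \<subseteq> W" "d \<le> card U" using supp unfolding supp_deg_ge_def g_zero_def by auto
    then show False using assms(2,3) card_mono[of W U] by linarith
  qed
qed

lemma supp_deg_ge_pair:
  assumes "i \<in> A" "j \<in> A"
  shows "supp_deg_ge (A \<times> UNIV) 2 (g_mul (psibar i) (psi j))"
proof -
  have "supp_deg_ge (A \<times> UNIV) 1 (psibar i)"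
    unfolding psibar_def by (rule supp_deg_ge_gen) (use assms in simp)
  moreover have "supp_deg_ge (A \<times> UNIV) 1 (psi j)"
    unfolding psi_def by (rule supp_deg_ge_gen) (use assms in simp)
  ultimately show ?thesis by (metis one_add_one supp_deg_ge_mul)
qed

lemma supp_deg_ge_tau:
  assumes "finite A"
  shows "supp_deg_ge (A \<times> UNIV) (2 * card A) (tau A)"
proof -
  have "supp_deg_ge (set l \<times> UNIV) (2 * length l)
          (foldr (\<lambda>i acc. g_mul (g_mul (psibar i) (psi i)) acc) l g_one)" for l :: "'a list"
  proof (induction l)
    case Nil
    show ?case by (simp add: supp_deg_ge_one)
  next
    case (Cons a l)
    have "supp_deg_ge (set (a # l) \<times> UNIV) 2 (g_mul (psibar a) (psi a))"
      by (rule supp_deg_ge_pair) auto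
    moreover have "supp_deg_ge (set (a # l) \<times> UNIV) (2 * length l)
                     (foldr (\<lambda>i acc. g_mul (g_mul (psibar i) (psi i)) acc) l g_one)"
      by (rule supp_deg_ge_mono[OF Cons.IH]) auto
    ultimately have "supp_deg_ge (set (a # l) \<times> UNIV) (2 + 2 * length l)
                       (foldr (\<lambda>i acc. g_mul (g_mul (psibar i) (psi i)) acc) (a # l) g_one)"
      unfolding foldr.simps o_apply by (rule supp_deg_ge_mul)
    then show ?case by simp
  qed
  from this[of "sorted_list_of_set A"] show ?thesis
    unfolding tau_def using assms by simp
qed

lemma supp_deg_ge_fA:
  assumes fin: "finite A" and card: "card A \<ge> 2"
  shows "supp_deg_ge (A \<times> UNIV) (2 * card A - 2) (fA lam A)"
proof -
  have tau_sub: "supp_deg_ge (A \<times> UNIV) (2 * card A - 2 * card B) (tau (A - B))"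
    if "B \<subseteq> A" for B
    using supp_deg_ge_tau[of "A - B"] fin that
    by (auto simp: card_Diff_subset finite_subset diff_mult_distrib2 intro: supp_deg_ge_mono)
  have "supp_deg_ge (A \<times> UNIV) (2 * card A - 2) (tau (A - {i}))" if "i \<in> A" for i
    using tau_sub[of "{i}"] that by simp
  moreover have "supp_deg_ge (A \<times> UNIV) (2 * card A - 2)
                   (g_mul (g_mul (psibar i) (psi j)) (tau (A - {i, j})))"
    if "i \<in> A" "j \<in> A" "i \<noteq> j" for i j
  proof (rule supp_deg_ge_mono)
    show "supp_deg_ge (A \<times> UNIV) (2 + (2 * card A - 2 * card {i, j}))
            (g_mul (g_mul (psibar i) (psi j)) (tau (A - {i, j})))"
      using that by (intro supp_deg_ge_mul supp_deg_ge_pair tau_sub) auto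
  qed (use that card in auto)
  moreover have "supp_deg_ge (A \<times> UNIV) (2 * card A - 2) (tau A)"
    using supp_deg_ge_tau[OF fin] by (rule supp_deg_ge_mono) auto
  ultimately show ?thesis
    unfolding fA_def
    by (intro supp_deg_ge_diff supp_deg_ge_add supp_deg_ge_smul supp_deg_ge_sum) auto
qed

lemma fA_square_eq_zero_if_card_ge_3:
  assumes "finite A" "card A \<ge> 3"
  shows "g_mul (fA lam A) (fA lam A) = g_zero"
proof (rule supp_deg_ge_eq_zero)
  show "supp_deg_ge (A \<times> UNIV) ((2 * card A - 2) + (2 * card A - 2))
          (g_mul (fA lam A) (fA lam A))"
    using assms by (intro supp_deg_ge_mul supp_deg_ge_fA) auto
  have "card (A \<times> (UNIV :: bool set)) = 2 * card A"
    by (simp add: card_cartesian_product)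
  then show "card (A \<times> (UNIV :: bool set)) < (2 * card A - 2) + (2 * card A - 2)"
    using assms(2) by linarith
  show "finite (A \<times> (UNIV :: bool set))"
    using assms(1) by simp
qed

definition g_mono :: "'g set \<Rightarrow> 'g grass" where
  "g_mono S = (\<lambda>U. if U = S then 1 else 0)"

lemma g_gen_eq_g_mono: "g_gen g = g_mono {g}"
  unfolding g_gen_def g_mono_def by simp

lemma g_one_eq_g_mono: "g_one = g_mono {}"
  unfolding g_one_def g_mono_def by simp

lemma g_mul_g_mono:
  fixes S T :: "'g::linorder set"
  assumes "finite S" "finite T"
  shows "g_mul (g_mono S) (g_mono T) =
           (if S \<inter> T = {} then g_smul (gsign S T) (g_mono (S \<union> T)) else g_zero)"
proof
  fix U
  have sum_eq: "g_mul (g_mono S) (g_mono T) U =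
      (\<Sum>S'\<in>Pow U. if S' = S then gsign S (U - S) * (if U - S = T then 1 else 0) else 0)"
    unfolding g_mul_def g_mono_def by (intro sum.cong) auto
  show "g_mul (g_mono S) (g_mono T) U =
          (if S \<inter> T = {} then g_smul (gsign S T) (g_mono (S \<union> T)) else g_zero) U"
  proof (cases "finite U")
    case True
    then show ?thesis
      unfolding sum_eq sum.delta[OF finite_Pow_iff[THEN iffD2, OF True]]
      by (auto simp: g_smul_def g_mono_def g_zero_def)
  next
    case False
    then have "g_mul (g_mono S) (g_mono T) U = 0" "U \<noteq> S \<union> T"
      unfolding g_mul_def using assms by auto
    then show ?thesis unfolding g_smul_def g_mono_def g_zero_def by auto
  qed
qed

lemma g_mul_add_left: "g_mul (g_add x y) z = g_add (g_mul x z) (g_mul y z)"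
  unfolding g_mul_def g_add_def by (auto simp: algebra_simps sum.distrib)

lemma g_mul_add_right: "g_mul z (g_add x y) = g_add (g_mul z x) (g_mul z y)"
  unfolding g_mul_def g_add_def by (auto simp: algebra_simps sum.distrib)

lemma g_mul_smul_left: "g_mul (g_smul c x) z = g_smul c (g_mul x z)"
  unfolding g_mul_def g_smul_def by (auto simp: algebra_simps sum_distrib_left)

lemma g_mul_smul_right: "g_mul z (g_smul c x) = g_smul c (g_mul z x)"
  unfolding g_mul_def g_smul_def by (auto simp: algebra_simps sum_distrib_left)

lemma gsign_ordered:
  assumes "\<And>s t. s \<in> S \<Longrightarrow> t \<in> T \<Longrightarrow> s \<le> t"
  shows "gsign S T = 1"
proof -
  have "{(s, t). s \<in> S \<and> t \<in> T \<and> t < s} = {}"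
    using assms leD by fastforce
  then show ?thesis unfolding gsign_def by (metis card.empty power_0)
qed

lemma gsign_empty_right: "gsign S {} = 1"
  unfolding gsign_def by simp

lemma gsign_singleton: "gsign {s} {t} = (if t < s then -1 else 1)"
proof -
  have "{(s', t'). s' \<in> {s} \<and> t' \<in> {t} \<and> t' < s'} = (if t < s then {(s, t)} else {})"
    by auto
  then show ?thesis unfolding gsign_def by simp
qed

lemma gsign_swap:
  fixes S T :: "'g::linorder set"
  assumes "finite S" "finite T" "S \<inter> T = {}"
  shows "gsign T S = (-1) ^ (card S * card T) * gsign S T"
proof -
  let ?inv = "{(s, t). s \<in> S \<and> t \<in> T \<and> t < s}"
    and ?ord = "{(s, t). s \<in> S \<and> t \<in> T \<and> s < t}"
  have "card {(t, s). t \<in> T \<and> s \<in> S \<and> s < t} = card ?ord"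
    by (rule bij_betw_same_card[of prod.swap]) (auto simp: bij_betw_def image_iff)
  moreover have "card S * card T = card ?inv + card ?ord"
  proof -
    have "finite ?inv" "finite ?ord"
      by (rule finite_subset[of _ "S \<times> T"]; use assms in auto)+
    have "S \<times> T = ?inv \<union> ?ord"
      using assms(3) by (auto simp: neq_iff)
    then have "card (S \<times> T) = card (?inv \<union> ?ord)" by simp
    also have "\<dots> = card ?inv + card ?ord"
      by (rule card_Un_disjoint) (use \<open>finite ?inv\<close> \<open>finite ?ord\<close> in auto)
    finally show ?thesis by (simp add: card_cartesian_product)
  qed
  ultimately have "gsign T S * gsign S T = (-1) ^ (card S * card T)"
    unfolding gsign_def by (simp add: power_add)
  moreover have "gsign S T * gsign S T = 1"
    unfolding gsign_def by (simp flip: power_add mult_2)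
  ultimately show ?thesis
    by (metis mult.assoc mult.commute mult_1_right)
qed

lemma g_smul_g_smul: "g_smul c (g_smul d x) = g_smul (c * d) x"
  unfolding g_smul_def by (simp add: mult.assoc)

lemma g_smul_one: "g_smul 1 x = x"
  unfolding g_smul_def by simp

lemma g_mul_psibar_psi:
  "g_mul (psibar i) (psi j) = g_smul (gsign {(i,True)} {(j,False)}) (g_mono {(i,True), (j,False)})"
  unfolding psibar_def psi_def g_gen_eq_g_mono by (simp add: g_mul_g_mono insert_commute)

lemma tau_singleton: "tau {a} = g_smul (-1) (g_mono {(a,False), (a,True)})"
  unfolding tau_def g_one_eq_g_mono
  by (simp add: g_mul_psibar_psi g_mul_smul_left g_mul_g_mono gsign_singleton gsign_empty_right
      g_smul_one insert_commute)

lemma tau_pair: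
  assumes "a < b"
  shows "tau {a, b} = g_mono {(a,False), (a,True), (b,False), (b,True)}"
proof -
  have "gsign {(a,False), (a,True)} {(b,False), (b,True)} = 1"
    by (rule gsign_ordered) (use assms in auto)
  then show ?thesis
    unfolding tau_def g_one_eq_g_mono using assms
    by (simp add: less_imp_le g_mul_psibar_psi g_mul_smul_left g_mul_smul_right g_mul_g_mono
        gsign_singleton gsign_empty_right g_smul_g_smul g_smul_one insert_commute)
qed

lemma g_sum_doubleton: "x \<noteq> y \<Longrightarrow> g_sum f {x, y} = g_add (f x) (f y)"
  unfolding g_sum_def g_add_def by auto

lemma fA_pair_eq:
  fixes a b :: "'a::linorder"
  assumes ab: "a < b"
  shows "fA lam {a, b} =
    g_add (g_smul (-lam) (g_mono {(a,False), (a,True), (b,False), (b,True)}))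
     (g_add (g_smul (-1) (g_mono {(a,False), (a,True)}))
      (g_add (g_smul (-1) (g_mono {(b,False), (b,True)}))
       (g_add (g_smul (-1) (g_mono {(a,True), (b,False)})) (g_mono {(a,False), (b,True)}))))"
proof -
  have pairs: "{(i, j). i \<in> {a, b} \<and> j \<in> {a, b} \<and> i \<noteq> j} = {(a, b), (b, a)}"
    using ab by auto
  have diffs: "{a, b} - {a} = {b}" "{a, b} - {b} = {a}" "{a, b} - {a, b} = {}" "{a, b} - {b, a} = {}"
    using ab by auto
  have tau_empty: "tau {} = g_mono {}"
    by (simp add: tau_def g_one_eq_g_mono)
  show ?thesis
    unfolding fA_def pairs using ab
    by (simp add: g_sum_doubleton diffs tau_empty tau_singleton tau_pair g_mul_psibar_psi
        g_mul_smul_left g_mul_g_mono gsign_singleton gsign_empty_right)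
      (auto simp: g_sum_def g_add_def g_diff_def g_smul_def g_mono_def insert_commute)
qed

lemma fA_pair_square_eq_zero:
  fixes a b :: "'a::linorder"
  assumes ab: "a < b"
  shows "g_mul (fA lam {a, b}) (fA lam {a, b}) = g_zero"
proof -
  have neq: "a \<noteq> b" "b \<noteq> a" using ab by auto
  have sign_aa_bb: "gsign {(a,False), (a,True)} {(b,False), (b,True)} = 1"
    by (rule gsign_ordered) (use ab in auto)
  have sign_ab_ba: "gsign {(a,True), (b,False)} {(a,False), (b,True)} = 1"
  proof -
    have "{(s, t). s \<in> {(a,True), (b,False)} \<and> t \<in> {(a,False), (b,True)} \<and> t < s} =
          {((a,True), (a,False)), ((b,False), (a,False))}"
      using ab by auto
    then show ?thesis unfolding gsign_def using neq by simp
  qed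
  have sign_bb_aa: "gsign {(b,False), (b,True)} {(a,False), (a,True)} = 1"
    using gsign_swap[of "{(a,False), (a,True)}" "{(b,False), (b,True)}"] sign_aa_bb neq by simp
  have sign_ba_ab: "gsign {(a,False), (b,True)} {(a,True), (b,False)} = 1"
    using gsign_swap[of "{(a,True), (b,False)}" "{(a,False), (b,True)}"] sign_ab_ba neq by simp
  text \<open>The only products of disjoint monomials are those of \<open>\<tau>\<^sub>a\<close> with \<open>\<tau>\<^sub>b\<close> and of
    \<open>psibar\<^sub>a \<psi>\<^sub>b\<close> with \<open>psibar\<^sub>b \<psi>\<^sub>a\<close>, all with sign \<open>1\<close>, so their coefficients cancel.\<close>
  show ?thesis
    unfolding fA_pair_eq[OF ab]
    by (simp add: g_mul_add_left g_mul_add_right g_mul_smul_left g_mul_smul_right g_mul_g_mono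
        neq sign_aa_bb sign_bb_aa sign_ab_ba sign_ba_ab)
      (auto simp: g_add_def g_smul_def g_mono_def g_zero_def insert_commute)
qed

theorem corollary4p2:
  fixes V :: "'a::linorder set" and A :: "'a set" and lam :: complex
  assumes "finite V" and "A \<subseteq> V" and "card A \<ge> 2"
  shows "g_mul (fA lam A) (fA lam A) = g_zero"
proof (cases "card A = 2")
  case True
  then obtain x y where "A = {x, y}" "x \<noteq> y"
    by (meson card_2_iff)
  then obtain a b where "A = {a, b}" "a < b"
    by (metis insert_commute linorder_neqE)
  then show ?thesis
    using fA_pair_square_eq_zero by blast
next
  case False
  with assms(3) have "card A \<ge> 3"
    by simp
  moreover have "finite A"
    using assms(1,2) finite_subset by blast
  ultimately show ?thesis
    using fA_square_eq_zero_if_card_ge_3 by blast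
qed

end
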